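(* Let $r\ge 2$ and $m = 2$. Let $a_{ij}\in\mathbb{C}$ ($1\le i\le 2$, $1\le j\le r$) and $f_i=\sum_{j=1}^r a_{ij}z_j$. Let $S_1$ be the family $(z_1^2,\dots,z_r^2,f_1^2,f_2^2)$ in $\mathbb{C}[z_1,\dots,z_r]$ and $S_2$ the family of all products of two distinct members of $S_1$. Then $S_2$ is linearly independent if and only if $S_1$ is linearly independent.
   Context: For a finite family $S_1=(p_1,\dots,p_l)$ of polynomials and $1\le k\le l$, $S_k$ denotes the family $(p_{i_1}p_{i_2}\cdots p_{i_k})_{1\le i_1<\dots<i_k\le l}$ of the $\binom{l}{k}$ products of $k$ members of $S_1$ with distinct indices. A family is linearly independent (over $\mathbb{C}$) if no nontrivial $\mathbb{C}$-linear combination of its members (counted with their indices, so repeated members make the family dependent) vanishes. *)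

theory Defs
  imports Complex_Main "HOL-Library.Poly_Mapping"
begin

text \<open>Multivariate polynomials over the complex numbers in variables z_0, z_1, ...:
  a polynomial is a finitely supported map from monomials (exponent vectors
  nat =>0 nat) to coefficients; multiplication is convolution.\<close>

type_synonym cpoly = "(nat \<Rightarrow>\<^sub>0 nat) \<Rightarrow>\<^sub>0 complex"

definition pvar :: "nat \<Rightarrow> cpoly" where
  "pvar j = Poly_Mapping.single (Poly_Mapping.single j 1) 1"

definition pconst :: "complex \<Rightarrow> cpoly" where
  "pconst c = Poly_Mapping.single 0 c"

definition lin_indep_family :: "'i set \<Rightarrow> ('i \<Rightarrow> cpoly) \<Rightarrow> bool" where
  "lin_indep_family I P \<longleftrightarrow>
     (\<forall>c :: 'i \<Rightarrow> complex. (\<Sum>i\<in>I. pconst (c i) * P i) = 0 \<longrightarrow> (\<forall>i\<in>I. c i = 0))"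

text \<open>Linear form f_i = sum_j a i j z_j (variables indexed 0..r-1, i in {0,1}).\<close>
definition linform :: "nat \<Rightarrow> (nat \<Rightarrow> nat \<Rightarrow> complex) \<Rightarrow> nat \<Rightarrow> cpoly" where
  "linform r a i = (\<Sum>j<r. pconst (a i j) * pvar j)"

text \<open>The family S_1 = (z_0^2,...,z_{r-1}^2, f_0^2, f_1^2), indexed by {0..<r+2}.\<close>
definition S1fam :: "nat \<Rightarrow> (nat \<Rightarrow> nat \<Rightarrow> complex) \<Rightarrow> nat \<Rightarrow> cpoly" where
  "S1fam r a k = (if k < r then pvar k ^ 2 else linform r a (k - r) ^ 2)"

text \<open>The family S_2 of products of two members of S_1 with distinct indices,
  indexed by pairs (i,k) with i < k < r+2.\<close>
definition S2idx :: "nat \<Rightarrow> (nat \<times> nat) set" where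
  "S2idx r = {(i, k). i < k \<and> k < r + 2}"

definition S2fam :: "nat \<Rightarrow> (nat \<Rightarrow> nat \<Rightarrow> complex) \<Rightarrow> nat \<times> nat \<Rightarrow> cpoly" where
  "S2fam r a ik = S1fam r a (fst ik) * S1fam r a (snd ik)"

end

theory Submission
  imports Defs
begin

text \<open>
  Write s_0, ..., s_(r+1) for the members of S1 and f0, f1 for the two linear forms.
  If S1 satisfies a nontrivial relation with some coefficient c_k = 0, multiplying it by s_k gives
  a nontrivial relation in S2. If no coefficient vanishes, then p f0^2 + q f1^2 equals the
  diagonal form -(c_0 z_0^2 + ... + c_(r-1) z_(r-1)^2) of rank r; as a sum of two squares it has
  rank at most 2, so r = 2, and then an explicit multiple of the relation lies in the span of S2.

  Conversely, a relation in S2 is evaluated at points with at most four nonzero coordinates,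
  which reads off the coefficients of the monomials z_i^4, z_i^3 z_l, z_i z_j z_k z_l and
  z_m^2 z_k z_l. Independence of S1 means that no nontrivial p f0^2 + q f1^2 is a diagonal
  quadratic form, and with this the coefficients of f0^2 f1^2, of z_j^2 f0^2 and z_j^2 f1^2, and
  finally of z_i^2 z_k^2 are shown to vanish one after the other.
\<close>

section \<open>Evaluation of polynomials\<close>

definition eval_monom :: "(nat \<Rightarrow> complex) \<Rightarrow> (nat \<Rightarrow>\<^sub>0 nat) \<Rightarrow> complex" where
  "eval_monom x m = (\<Prod>j\<in>Poly_Mapping.keys m. x j ^ Poly_Mapping.lookup m j)"

definition eval_poly :: "(nat \<Rightarrow> complex) \<Rightarrow> cpoly \<Rightarrow> complex" where
  "eval_poly x p = (\<Sum>m\<in>Poly_Mapping.keys p. Poly_Mapping.lookup p m * eval_monom x m)"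

lemma eval_monom_superset:
  "finite S \<Longrightarrow> Poly_Mapping.keys m \<subseteq> S \<Longrightarrow>
    eval_monom x m = (\<Prod>j\<in>S. x j ^ Poly_Mapping.lookup m j)"
  unfolding eval_monom_def by (rule prod.mono_neutral_left) (auto simp: in_keys_iff)

lemma eval_monom_add: "eval_monom x (m + n) = eval_monom x m * eval_monom x n"
proof -
  let ?S = "Poly_Mapping.keys m \<union> Poly_Mapping.keys n"
  have "eval_monom x (m + n) = (\<Prod>j\<in>?S. x j ^ Poly_Mapping.lookup (m + n) j)"
    by (rule eval_monom_superset) (auto simp: keys_add)
  also have "\<dots> = (\<Prod>j\<in>?S. x j ^ Poly_Mapping.lookup m j) * (\<Prod>j\<in>?S. x j ^ Poly_Mapping.lookup n j)"
    by (simp add: lookup_add power_add prod.distrib)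
  also have "\<dots> = eval_monom x m * eval_monom x n"
    using eval_monom_superset[of ?S m x] eval_monom_superset[of ?S n x] by auto
  finally show ?thesis .
qed

lemma eval_poly_superset:
  "finite S \<Longrightarrow> Poly_Mapping.keys p \<subseteq> S \<Longrightarrow>
    eval_poly x p = (\<Sum>m\<in>S. Poly_Mapping.lookup p m * eval_monom x m)"
  unfolding eval_poly_def by (rule sum.mono_neutral_left) (auto simp: in_keys_iff)

lemma eval_poly_add: "eval_poly x (p + q) = eval_poly x p + eval_poly x q"
proof -
  let ?S = "Poly_Mapping.keys p \<union> Poly_Mapping.keys q"
  have "eval_poly x (p + q) = (\<Sum>m\<in>?S. Poly_Mapping.lookup (p + q) m * eval_monom x m)"
    by (rule eval_poly_superset) (auto simp: keys_add)
  also have "\<dots> = (\<Sum>m\<in>?S. Poly_Mapping.lookup p m * eval_monom x m)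
      + (\<Sum>m\<in>?S. Poly_Mapping.lookup q m * eval_monom x m)"
    by (simp add: lookup_add distrib_right sum.distrib)
  also have "\<dots> = eval_poly x p + eval_poly x q"
    using eval_poly_superset[of ?S p x] eval_poly_superset[of ?S q x] by auto
  finally show ?thesis .
qed

lemma eval_poly_0 [simp]: "eval_poly x 0 = 0"
  by (simp add: eval_poly_def)

lemma eval_poly_single [simp]: "eval_poly x (Poly_Mapping.single m c) = c * eval_monom x m"
  by (simp add: eval_poly_def)

lemma update_eq_add_single:
  "m \<notin> Poly_Mapping.keys p \<Longrightarrow> Poly_Mapping.update m c p = p + Poly_Mapping.single m c"
  by (rule poly_mapping_eqI) (auto simp: lookup_update lookup_add lookup_single in_keys_iff)

lemma eval_poly_single_mult:
  "eval_poly x (Poly_Mapping.single m c * q) = c * eval_monom x m * eval_poly x q"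
proof (induction q rule: Poly_Mapping.update_induct)
  case (update p n d)
  then show ?case
    by (simp add: update_eq_add_single distrib_left eval_poly_add mult_single eval_monom_add
        algebra_simps)
qed simp

lemma eval_poly_mult: "eval_poly x (p * q) = eval_poly x p * eval_poly x q"
proof (induction p rule: Poly_Mapping.update_induct)
  case (update p m c)
  then have "Poly_Mapping.update m c p * q = p * q + Poly_Mapping.single m c * q"
    by (simp add: update_eq_add_single distrib_right)
  then have "eval_poly x (Poly_Mapping.update m c p * q)
      = eval_poly x p * eval_poly x q + c * eval_monom x m * eval_poly x q"
    using update.IH by (simp only: eval_poly_add eval_poly_single_mult)
  moreover have "eval_poly x (Poly_Mapping.update m c p) = eval_poly x p + c * eval_monom x m"
    using update.hyps by (simp add: update_eq_add_single eval_poly_add)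
  ultimately show ?case by (simp add: algebra_simps)
qed simp

lemma eval_poly_sum: "eval_poly x (\<Sum>i\<in>I. p i) = (\<Sum>i\<in>I. eval_poly x (p i))"
  by (induction I rule: infinite_finite_induct) (auto simp: eval_poly_add)

lemma eval_poly_power: "eval_poly x (p ^ n) = eval_poly x p ^ n"
  by (induction n) (simp_all add: eval_poly_mult eval_monom_def flip: single_one)

lemma eval_poly_pvar [simp]: "eval_poly x (pvar j) = x j"
  by (simp add: pvar_def eval_monom_def lookup_single)

lemma eval_poly_pconst [simp]: "eval_poly x (pconst c) = c"
  by (simp add: pconst_def eval_monom_def)

lemma pconst_add: "pconst (a + b) = pconst a + pconst b"
  by (simp add: pconst_def single_add)

lemma pconst_mult: "pconst (a * b) = pconst a * pconst b"
  by (simp add: pconst_def mult_single)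

lemma pconst_0 [simp]: "pconst 0 = 0"
  by (simp add: pconst_def)

lemma pconst_minus: "pconst (- a) = - pconst a"
  by (simp add: pconst_def single_uminus)

lemma pconst_diff: "pconst (a - b) = pconst a - pconst b"
  by (simp add: pconst_def single_diff)

lemma pconst_numeral: "pconst (numeral n) = numeral n"
  by (simp add: pconst_def)

lemma pconst_power: "pconst (a ^ n) = pconst a ^ n"
  by (induction n) (simp_all add: pconst_mult, simp add: pconst_def)

definition linear_sum :: "nat \<Rightarrow> (nat \<Rightarrow> complex) \<Rightarrow> (nat \<Rightarrow> complex) \<Rightarrow> complex" where
  "linear_sum r w x = (\<Sum>j<r. w j * x j)"

definition square_sum :: "nat \<Rightarrow> (nat \<Rightarrow> complex) \<Rightarrow> (nat \<Rightarrow> complex) \<Rightarrow> complex" where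
  "square_sum r w x = (\<Sum>j<r. w j * (x j)^2)"

lemma sum_fun_upd:
  fixes g :: "'a \<Rightarrow> 'b \<Rightarrow> 'c::ab_group_add"
  assumes "finite S" "i \<in> S"
  shows "(\<Sum>n\<in>S. g n ((f(i := v)) n)) = (\<Sum>n\<in>S. g n (f n)) + (g i v - g i (f i))"
proof -
  have "(\<Sum>n\<in>S. g n ((f(i := v)) n)) = g i v + (\<Sum>n\<in>S - {i}. g n (f n))"
    using assms by (simp add: sum.remove[of S i])
  moreover have "(\<Sum>n\<in>S. g n (f n)) = g i (f i) + (\<Sum>n\<in>S - {i}. g n (f n))"
    using assms by (simp add: sum.remove[of S i])
  ultimately show ?thesis by simp
qed

lemma linear_sum_zero [simp]: "linear_sum r w (\<lambda>_. 0) = 0"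
  by (simp add: linear_sum_def)

lemma square_sum_zero [simp]: "square_sum r w (\<lambda>_. 0) = 0"
  by (simp add: square_sum_def)

lemma linear_sum_fun_upd [simp]:
  "i < r \<Longrightarrow> linear_sum r w (x(i := v)) = linear_sum r w x + w i * (v - x i)"
  using sum_fun_upd[of "{..<r}" i "\<lambda>n v. w n * v" x v]
  by (simp del: fun_upd_apply add: linear_sum_def right_diff_distrib)

lemma square_sum_fun_upd [simp]:
  "i < r \<Longrightarrow> square_sum r w (x(i := v)) = square_sum r w x + w i * (v^2 - (x i)^2)"
  using sum_fun_upd[of "{..<r}" i "\<lambda>n v. w n * v^2" x v]
  by (simp del: fun_upd_apply add: square_sum_def right_diff_distrib)

text \<open>
  With A, B the coefficient vectors of f0, f1, this says that no nontrivial combination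
  p f0^2 + q f1^2 is a diagonal quadratic form; it is the only consequence of the independence
  of S1 that is used.
\<close>

definition offdiag_indep :: "nat \<Rightarrow> (nat \<Rightarrow> complex) \<Rightarrow> (nat \<Rightarrow> complex) \<Rightarrow> bool" where
  "offdiag_indep r A B \<longleftrightarrow>
     (\<forall>p q. (\<forall>k l. k < l \<longrightarrow> l < r \<longrightarrow> p * (A k * A l) + q * (B k * B l) = 0)
        \<longrightarrow> p = 0 \<and> q = 0)"

lemma offdiag_indep_swap: "offdiag_indep r A B \<Longrightarrow> offdiag_indep r B A"
  unfolding offdiag_indep_def by (metis add.commute)

lemma offdiag_indep_nonzero_pair:
  assumes "offdiag_indep r A B"
  obtains k l where "k < l" "l < r" "A k * A l \<noteq> 0"
proof -
  have "\<not> (\<forall>k l. k < l \<longrightarrow> l < r \<longrightarrow> 1 * (A k * A l) + 0 * (B k * B l) = 0)"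
    using assms unfolding offdiag_indep_def by (metis one_neq_zero)
  with that show ?thesis by auto
qed

lemma offdiag_indep_not_single_support:
  assumes "offdiag_indep r A B" "\<And>l. l < r \<Longrightarrow> l \<noteq> i \<Longrightarrow> A l = 0"
  shows False
proof -
  obtain k l where "k < l" "l < r" "A k * A l \<noteq> 0"
    using offdiag_indep_nonzero_pair[OF assms(1)] .
  with assms(2)[of k] assms(2)[of l] show False by force
qed

lemma offdiag_indep_not_pair_support:
  assumes indep: "offdiag_indep r A B"
    and supp: "\<And>l. l < r \<Longrightarrow> l \<noteq> i \<Longrightarrow> l \<noteq> j \<Longrightarrow> A l = 0 \<and> B l = 0"
  shows False
proof -
  have off_ij: "A k * A l = 0 \<and> B k * B l = 0"
    if "k < l" "l < r" "\<not> (k = i \<and> l = j \<or> k = j \<and> l = i)" for k l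
    using that supp[of k] supp[of l] by force
  have "B i * B j * (A k * A l) + - (A i * A j) * (B k * B l) = 0"
    if "k < l" "l < r" for k l
    using off_ij[OF that] by (cases "k = i \<and> l = j \<or> k = j \<and> l = i") (auto simp: algebra_simps)
  then have "B i * B j = 0 \<and> - (A i * A j) = 0"
    using indep unfolding offdiag_indep_def by blast
  then have "A k * A l = 0" if "k < l" "l < r" for k l
    using off_ij[OF that] by (cases "k = i \<and> l = j \<or> k = j \<and> l = i") (auto simp: mult.commute)
  then show False
    using offdiag_indep_nonzero_pair[OF indep] by blast
qed

lemma even_quadratic_vanishing_imp_const_eq_0:
  fixes X Y :: "'a::field_char_0"
  assumes "\<And>t. t \<noteq> 0 \<Longrightarrow> X + t^2 * Y = 0"
  shows "X = 0"
proof -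
  have "3 * X = 4 * (X + 1^2 * Y) - (X + 2^2 * Y)"
    by (simp add: algebra_simps)
  also have "\<dots> = 0"
    using assms[of 1] assms[of 2] by simp
  finally show ?thesis
    by simp
qed

section \<open>Coefficients of a relation in S2\<close>

text \<open>
  A relation between the products s_i s_k, evaluated at x: A and B are the coefficients of f0 and
  f1, \<alpha> j and \<beta> j the coefficients of z_j^2 f0^2 and z_j^2 f1^2, \<gamma> that of f0^2 f1^2, and
  Q collects the terms with z_i^2 z_k^2.
\<close>

locale S2_relation_values =
  fixes r :: nat and A B \<alpha> \<beta> :: "nat \<Rightarrow> complex" and \<gamma> :: complex
    and Q :: "(nat \<Rightarrow> complex) \<Rightarrow> complex"
  assumes vanishes: "Q x + (linear_sum r A x)^2 * square_sum r \<alpha> x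
      + (linear_sum r B x)^2 * square_sum r \<beta> x
      + \<gamma> * (linear_sum r A x)^2 * (linear_sum r B x)^2 = 0"
    and Q_even: "(\<And>j. (y j)^2 = (x j)^2) \<Longrightarrow> Q y = Q x"
    and Q_axis: "Q ((\<lambda>_. 0)(i := t)) = 0"
begin

lemma quartic_coeff:
  assumes "i < r"
  shows "\<alpha> i * (A i)^2 + \<beta> i * (B i)^2 + \<gamma> * (A i)^2 * (B i)^2 = 0"
  using vanishes[of "(\<lambda>_. 0)(i := 1)"] Q_axis[of i 1] assms by (simp add: mult.commute)

lemma cubic_coeff:
  assumes "i < r" "l < r" "i \<noteq> l"
  shows "\<alpha> i * A i * A l + \<beta> i * B i * B l
    + \<gamma> * (A i * A l * (B i)^2 + (A i)^2 * B i * B l) = 0"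
proof -
  define X where "X = \<alpha> i * A i * A l + \<beta> i * B i * B l
    + \<gamma> * (A i * A l * (B i)^2 + (A i)^2 * B i * B l)"
  define Y where "Y = \<alpha> l * A i * A l + \<beta> l * B i * B l
    + \<gamma> * (A i * A l * (B l)^2 + (A l)^2 * B i * B l)"
  define P where "P t = (A i + A l * t)^2 * (\<alpha> i + \<alpha> l * t^2)
    + (B i + B l * t)^2 * (\<beta> i + \<beta> l * t^2) + \<gamma> * (A i + A l * t)^2 * (B i + B l * t)^2"
    for t
  have P: "Q ((\<lambda>_. 0)(i := 1, l := t)) + P t = 0" for t
    using vanishes[of "(\<lambda>_. 0)(i := 1, l := t)"] assms by (simp add: P_def add.assoc)
  \<comment> \<open>X and Y are the coefficients of z_i^3 z_l and z_i z_l^3, which form the odd part in t.\<close>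
  have "Q ((\<lambda>_. 0)(i := 1, l := - t)) = Q ((\<lambda>_. 0)(i := 1, l := t))" for t
    by (rule Q_even) simp
  then have "P t - P (- t) = 0" for t
    using P[of t] P[of "- t"] by (simp add: eq_neg_iff_add_eq_0[symmetric])
  moreover have "P t - P (- t) = 4 * t * (X + t^2 * Y)" for t
    unfolding P_def X_def Y_def by (simp add: algebra_simps power2_eq_square)
  ultimately have "X = 0"
    by (intro even_quadratic_vanishing_imp_const_eq_0[of X Y]) (metis mult_eq_0_iff zero_neq_numeral)
  then show ?thesis
    unfolding X_def .
qed

lemma four_distinct_coeff:
  assumes idx: "i < r" "j < r" "k < r" "l < r" "distinct [i, j, k, l]"
    and zero: "A k = 0" "A l = 0" "B i = 0" "B j = 0"
  shows "\<gamma> * A i * A j * B k * B l = 0"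
proof -
  define x where "x s t u = (\<lambda>_. 0)(i := 1, j := s, k := t, l := u)" for s t u :: complex
  define W where "W s t u = (A i + A j * s)^2 * (\<alpha> i + \<alpha> j + \<alpha> k + \<alpha> l)
     + (B k * t + B l * u)^2 * (\<beta> i + \<beta> j + \<beta> k + \<beta> l)
     + \<gamma> * (A i + A j * s)^2 * (B k * t + B l * u)^2" for s t u :: complex
  have W: "W s t u = - Q (x 1 1 1)" if "s^2 = 1" "t^2 = 1" "u^2 = 1" for s t u
  proof -
    have "Q (x s t u) = Q (x 1 1 1)"
      by (rule Q_even) (use that in \<open>simp add: x_def\<close>)
    moreover have "Q (x s t u) + W s t u = 0"
      using vanishes[of "x s t u"] idx zero that by (simp add: x_def W_def add.assoc)
    ultimately show ?thesis
      by (simp add: eq_neg_iff_add_eq_0 add.commute)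
  qed
  have "32 * (\<gamma> * A i * A j * B k * B l) =
      W 1 1 1 - W 1 1 (-1) - W 1 (-1) 1 + W 1 (-1) (-1)
    - W (-1) 1 1 + W (-1) 1 (-1) + W (-1) (-1) 1 - W (-1) (-1) (-1)"
    unfolding W_def by (simp add: algebra_simps power2_eq_square)
  also have "\<dots> = 0"
    by (simp add: W)
  finally show ?thesis
    by simp
qed

lemma square_cross_coeff:
  assumes "\<gamma> = 0" and idx: "m < r" "k < r" "l < r" "distinct [m, k, l]"
  shows "\<alpha> m * A k * A l + \<beta> m * B k * B l = 0"
proof (rule even_quadratic_vanishing_imp_const_eq_0)
  fix c :: complex
  assume "c \<noteq> 0"
  define x where "x s t = (\<lambda>_. 0)(m := 1, k := s, l := t)" for s t :: complex
  define W where "W s t = (A m + A k * s + A l * t)^2 * (\<alpha> m + (\<alpha> k + \<alpha> l) * c^2)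
     + (B m + B k * s + B l * t)^2 * (\<beta> m + (\<beta> k + \<beta> l) * c^2)" for s t
  have W: "W (e * c) (e' * c) = - Q (x c c)" if "e^2 = 1" "e'^2 = 1" for e e'
  proof -
    have "Q (x (e * c) (e' * c)) = Q (x c c)"
      by (rule Q_even) (use that in \<open>simp add: x_def power_mult_distrib\<close>)
    moreover have "Q (x (e * c) (e' * c)) + W (e * c) (e' * c) = 0"
      using vanishes[of "x (e * c) (e' * c)"] assms that
      by (simp add: x_def W_def add.assoc power_mult_distrib algebra_simps)
    ultimately show ?thesis
      by (simp add: eq_neg_iff_add_eq_0 add.commute)
  qed
  have "8 * c^2 * ((\<alpha> m * A k * A l + \<beta> m * B k * B l)
      + c^2 * ((\<alpha> k + \<alpha> l) * A k * A l + (\<beta> k + \<beta> l) * B k * B l))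
    = W c c - W (-c) c - W c (-c) + W (-c) (-c)"
    unfolding W_def by (simp add: algebra_simps power2_eq_square)
  also have "\<dots> = 0"
    using W[of 1 1] W[of "-1" 1] W[of 1 "-1"] W[of "-1" "-1"] by simp
  finally show "(\<alpha> m * A k * A l + \<beta> m * B k * B l)
      + c^2 * ((\<alpha> k + \<alpha> l) * A k * A l + (\<beta> k + \<beta> l) * B k * B l) = 0"
    using \<open>c \<noteq> 0\<close> by simp
qed

text \<open>
  The vector (u n, w n) is orthogonal to (A l, B l) for all l \<noteq> n. Applied at i, this makes all
  (A l, B l) with l \<noteq> i proportional; applied at a second coordinate j, it confines A and B to
  the coordinates i and j, which contradicts offdiag_indep.
\<close>

lemma gamma_eq_0_if_mixed_coordinate:
  assumes indep: "offdiag_indep r A B" and i: "i < r" "A i \<noteq> 0" "B i \<noteq> 0"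
  shows "\<gamma> = 0"
proof (rule ccontr)
  assume "\<gamma> \<noteq> 0"
  define u where "u n = A n * (\<alpha> n + \<gamma> * (B n)^2)" for n
  define w where "w n = B n * (\<beta> n + \<gamma> * (A n)^2)" for n
  have orth: "u n * A l + w n * B l = 0" if "n < r" "l < r" "n \<noteq> l" for n l
    using cubic_coeff[OF that] unfolding u_def w_def by (simp add: algebra_simps power2_eq_square)
  have diag: "u n * A n + w n * B n = \<gamma> * (A n)^2 * (B n)^2" if "n < r" for n
    using quartic_coeff[OF that] unfolding u_def w_def by (simp add: algebra_simps power2_eq_square)
  show False
  proof (cases "w i = 0")
    case True
    then have "u i \<noteq> 0"
      using diag[OF i(1)] i \<open>\<gamma> \<noteq> 0\<close> by auto
    with True orth[OF i(1)] have "A l = 0" if "l < r" "l \<noteq> i" for l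
      using that by force
    then show False
      using offdiag_indep_not_single_support[OF indep] by blast
  next
    case False
    define t where "t = - u i / w i"
    have B_prop: "B l = t * A l" if "l < r" "l \<noteq> i" for l
      using orth[OF i(1) that(1)] that False
      unfolding t_def by (simp add: field_simps add_eq_0_iff2 mult.commute)
    show False
    proof (cases "t = 0")
      case True
      with B_prop have "B l = 0" if "l < r" "l \<noteq> i" for l
        using that by simp
      then show False
        using offdiag_indep_not_single_support[OF offdiag_indep_swap[OF indep]] by blast
    next
      case False
      obtain j where j: "j < r" "j \<noteq> i" "A j \<noteq> 0"
        using offdiag_indep_not_single_support[OF indep, of i] by blast
      have "B j \<noteq> 0"
        using B_prop[OF j(1,2)] False j(3) by simp
      then have nonzero: "(u j + t * w j) * A j \<noteq> 0"
        using diag[OF j(1)] B_prop[OF j(1,2)] \<open>\<gamma> \<noteq> 0\<close> j(3) by (simp add: algebra_simps)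
      have "A l = 0 \<and> B l = 0" if "l < r" "l \<noteq> i" "l \<noteq> j" for l
      proof -
        have "(u j + t * w j) * A l = 0"
          using orth[OF j(1) that(1)] B_prop[OF that(1,2)] that by (simp add: algebra_simps)
        then show ?thesis
          using nonzero B_prop[OF that(1,2)] by simp
      qed
      then show False
        using offdiag_indep_not_pair_support[OF indep] by blast
    qed
  qed
qed

lemma gamma_eq_0:
  assumes indep: "offdiag_indep r A B"
  shows "\<gamma> = 0"
proof (cases "\<exists>i<r. A i \<noteq> 0 \<and> B i \<noteq> 0")
  case True
  then show ?thesis
    using gamma_eq_0_if_mixed_coordinate[OF indep] by blast
next
  case False
  obtain i j where ij: "i < j" "j < r" "A i * A j \<noteq> 0"
    using offdiag_indep_nonzero_pair[OF indep] .
  obtain k l where kl: "k < l" "l < r" "B k * B l \<noteq> 0"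
    using offdiag_indep_nonzero_pair[OF offdiag_indep_swap[OF indep]] .
  have zero: "B i = 0" "B j = 0" "A k = 0" "A l = 0"
    using False ij kl by (metis less_trans mult_eq_0_iff)+
  then have "distinct [i, j, k, l]"
    using ij kl by auto
  then have "\<gamma> * A i * A j * B k * B l = 0"
    using four_distinct_coeff[of i j k l] ij kl zero by simp
  then show ?thesis
    using ij kl by simp
qed

lemma alpha_beta_eq_0:
  assumes indep: "offdiag_indep r A B" and "m < r"
  shows "\<alpha> m = 0 \<and> \<beta> m = 0"
proof -
  have "\<alpha> m * (A k * A l) + \<beta> m * (B k * B l) = 0" if kl: "k < l" "l < r" for k l
  proof -
    consider "m = k" | "m = l" | "distinct [m, k, l]"
      using kl by force
    then show ?thesis
      using cubic_coeff[of m l] cubic_coeff[of m k] square_cross_coeff[of m k l]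
        gamma_eq_0[OF indep] kl \<open>m < r\<close> by cases (auto simp: algebra_simps)
  qed
  then show ?thesis
    using indep unfolding offdiag_indep_def by blast
qed

lemma Q_eq_0:
  assumes "offdiag_indep r A B"
  shows "Q x = 0"
  using vanishes[of x] gamma_eq_0[OF assms] alpha_beta_eq_0[OF assms]
  by (simp add: square_sum_def)

end

section \<open>Independence of S1 implies independence of S2\<close>

lemma linform_square:
  "(linform r a i)^2 = (\<Sum>j<r. \<Sum>k<r. pconst (a i j * a i k) * (pvar j * pvar k))"
  unfolding power2_eq_square linform_def sum_product
  by (intro sum.cong refl) (simp add: pconst_mult algebra_simps)

lemma linform_square_combination_diagonal:
  assumes "\<And>k l. k < l \<Longrightarrow> l < r \<Longrightarrow> p * (a 0 k * a 0 l) + q * (a 1 k * a 1 l) = 0"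
  shows "pconst p * (linform r a 0)^2 + pconst q * (linform r a 1)^2
    = (\<Sum>j<r. pconst (p * (a 0 j)^2 + q * (a 1 j)^2) * (pvar j)^2)"
proof -
  have offdiag: "p * (a 0 j * a 0 k) + q * (a 1 j * a 1 k) = 0"
    if "j < r" "k < r" "k \<noteq> j" for j k
    using assms[of j k] assms[of k j] that by (cases "j < k") (auto simp: mult.commute)
  have "pconst p * (linform r a 0)^2 + pconst q * (linform r a 1)^2
      = (\<Sum>j<r. \<Sum>k<r. pconst (p * (a 0 j * a 0 k) + q * (a 1 j * a 1 k)) * (pvar j * pvar k))"
    unfolding linform_square sum_distrib_left sum.distrib[symmetric]
    by (intro sum.cong refl) (simp add: pconst_mult pconst_add algebra_simps)
  also have "\<dots> = (\<Sum>j<r. \<Sum>k<r. if k = j then pconst (p * (a 0 j)^2 + q * (a 1 j)^2) * (pvar j)^2 else 0)"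
    by (intro sum.cong refl) (simp add: offdiag[simplified] power2_eq_square)
  also have "\<dots> = (\<Sum>j<r. pconst (p * (a 0 j)^2 + q * (a 1 j)^2) * (pvar j)^2)"
    by simp
  finally show ?thesis .
qed

lemma S1_indep_imp_offdiag_indep:
  assumes "lin_indep_family {0..<r+2} (S1fam r a)"
  shows "offdiag_indep r (a 0) (a 1)"
  unfolding offdiag_indep_def
proof (intro allI impI)
  fix p q :: complex
  assume "\<forall>k l. k < l \<longrightarrow> l < r \<longrightarrow> p * (a 0 k * a 0 l) + q * (a 1 k * a 1 l) = 0"
  then have diag: "pconst p * (linform r a 0)^2 + pconst q * (linform r a 1)^2
      = (\<Sum>j<r. pconst (p * (a 0 j)^2 + q * (a 1 j)^2) * (pvar j)^2)"
    by (intro linform_square_combination_diagonal) blast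
  define c where "c k = (if k < r then - (p * (a 0 k)^2 + q * (a 1 k)^2) else if k = r then p else q)"
    for k
  have "(\<Sum>k\<in>{0..<r+2}. pconst (c k) * S1fam r a k)
      = (\<Sum>k<r. pconst (c k) * (pvar k)^2) + (pconst p * (linform r a 0)^2 + pconst q * (linform r a 1)^2)"
    by (simp add: atLeast0LessThan c_def S1fam_def add.assoc)
  also have "\<dots> = 0"
    unfolding diag by (simp add: c_def pconst_minus sum_negf del: minus_add_distrib)
  finally have "\<forall>k\<in>{0..<r+2}. c k = 0"
    using assms unfolding lin_indep_family_def by blast
  then have "c r = 0" "c (r + 1) = 0"
    by simp_all
  then show "p = 0 \<and> q = 0"
    by (simp add: c_def)
qed

definition pair_square_sum :: "nat \<Rightarrow> (nat \<times> nat \<Rightarrow> complex) \<Rightarrow> (nat \<Rightarrow> complex) \<Rightarrow> complex" where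
  "pair_square_sum r c x = (\<Sum>k<r. \<Sum>i<k. c (i, k) * (x i)^2 * (x k)^2)"

lemma pair_square_sum_axis: "pair_square_sum r c ((\<lambda>_. 0)(j := t)) = 0"
  unfolding pair_square_sum_def by (intro sum.neutral ballI) auto

lemma pair_square_sum_at_pair:
  assumes "i < k" "k < r"
  shows "pair_square_sum r c ((\<lambda>_. 0)(i := 1, k := 1)) = c (i, k)"
proof -
  define x :: "nat \<Rightarrow> complex" where "x = (\<lambda>_. 0)(i := 1, k := 1)"
  have "(\<Sum>i'<k'. c (i', k') * (x i')^2 * (x k')^2) = (if k' = k then c (i, k) else 0)" for k'
  proof (cases "k' = k")
    case True
    then have "(\<Sum>i'<k'. c (i', k') * (x i')^2 * (x k')^2) = (\<Sum>i'<k. if i' = i then c (i, k) else 0)"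
      using assms by (intro sum.cong) (auto simp: x_def)
    with True assms show ?thesis
      by simp
  next
    case False
    then have "c (i', k') * (x i')^2 * (x k')^2 = 0" if "i' < k'" for i'
      using that assms by (auto simp: x_def)
    then have "(\<Sum>i'<k'. c (i', k') * (x i')^2 * (x k')^2) = 0"
      by (intro sum.neutral ballI) simp
    with False show ?thesis
      by simp
  qed
  then show ?thesis
    using assms by (simp add: pair_square_sum_def x_def[symmetric])
qed

lemma sum_S2idx: "(\<Sum>p\<in>S2idx r. f p) = (\<Sum>k<r+2. \<Sum>i<k. f (i, k))"
proof -
  have S2idx_eq: "S2idx r = (\<lambda>(k, i). (i, k)) ` (SIGMA k:{..<r+2}. {..<k})"
    unfolding S2idx_def by (auto simp: image_iff)
  have "inj_on (\<lambda>(k, i). (i, k)) (SIGMA k:{..<r+2}. {..<k})"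
    by (auto simp: inj_on_def)
  then have "(\<Sum>p\<in>S2idx r. f p) = (\<Sum>(k, i)\<in>(SIGMA k:{..<r+2}. {..<k}). f (i, k))"
    unfolding S2idx_eq by (simp add: sum.reindex split_def)
  also have "\<dots> = (\<Sum>k<r+2. \<Sum>i<k. f (i, k))"
    by (rule sum.Sigma[symmetric]) auto
  finally show ?thesis .
qed

lemma eval_poly_linform: "eval_poly x (linform r a i) = linear_sum r (a i) x"
  by (simp add: linform_def linear_sum_def eval_poly_sum eval_poly_mult)

lemma eval_poly_S1fam:
  "eval_poly x (S1fam r a k) = (if k < r then (x k)^2 else (linear_sum r (a (k - r)) x)^2)"
  by (simp add: S1fam_def eval_poly_power eval_poly_linform)

lemma eval_poly_S2_combination:
  "eval_poly x (\<Sum>p\<in>S2idx r. pconst (c p) * S2fam r a p)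
    = pair_square_sum r c x
      + (linear_sum r (a 0) x)^2 * square_sum r (\<lambda>j. c (j, r)) x
      + (linear_sum r (a 1) x)^2 * square_sum r (\<lambda>j. c (j, r + 1)) x
      + c (r, r + 1) * (linear_sum r (a 0) x)^2 * (linear_sum r (a 1) x)^2"
proof -
  let ?s = "\<lambda>k. eval_poly x (S1fam r a k)"
  have "eval_poly x (\<Sum>p\<in>S2idx r. pconst (c p) * S2fam r a p)
      = (\<Sum>k<r+2. \<Sum>i<k. c (i, k) * ?s i * ?s k)"
    by (simp only: sum_S2idx eval_poly_sum eval_poly_mult eval_poly_pconst S2fam_def fst_conv snd_conv
        mult.assoc)
  also have "\<dots> = (\<Sum>k<r. \<Sum>i<k. c (i, k) * ?s i * ?s k)
      + (\<Sum>i<r. c (i, r) * ?s i * ?s r) + (\<Sum>i<r+1. c (i, r + 1) * ?s i * ?s (r + 1))"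
    by (simp add: lessThan_Suc add.commute add.left_commute)
  also have "(\<Sum>k<r. \<Sum>i<k. c (i, k) * ?s i * ?s k) = pair_square_sum r c x"
    unfolding pair_square_sum_def by (intro sum.cong refl) (auto simp: eval_poly_S1fam)
  also have "(\<Sum>i<r. c (i, r) * ?s i * ?s r)
      = (linear_sum r (a 0) x)^2 * square_sum r (\<lambda>j. c (j, r)) x"
    by (simp add: eval_poly_S1fam square_sum_def sum_distrib_left algebra_simps)
  also have "(\<Sum>i<r+1. c (i, r + 1) * ?s i * ?s (r + 1))
      = (linear_sum r (a 1) x)^2 * square_sum r (\<lambda>j. c (j, r + 1)) x
        + c (r, r + 1) * (linear_sum r (a 0) x)^2 * (linear_sum r (a 1) x)^2"
    by (simp add: eval_poly_S1fam square_sum_def sum_distrib_left algebra_simps)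
  finally show ?thesis
    by (simp only: add.assoc)
qed

lemma S2_relation_values_of_S2_relation:
  assumes "(\<Sum>p\<in>S2idx r. pconst (c p) * S2fam r a p) = 0"
  shows "S2_relation_values r (a 0) (a 1) (\<lambda>j. c (j, r)) (\<lambda>j. c (j, r + 1)) (c (r, r + 1))
    (pair_square_sum r c)"
proof
  show "pair_square_sum r c x + (linear_sum r (a 0) x)^2 * square_sum r (\<lambda>j. c (j, r)) x
      + (linear_sum r (a 1) x)^2 * square_sum r (\<lambda>j. c (j, r + 1)) x
      + c (r, r + 1) * (linear_sum r (a 0) x)^2 * (linear_sum r (a 1) x)^2 = 0" for x
    using arg_cong[OF assms, of "eval_poly x"] by (simp add: eval_poly_S2_combination)
qed (simp add: pair_square_sum_def, rule pair_square_sum_axis)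

lemma S1_indep_imp_S2_indep:
  assumes "lin_indep_family {0..<r+2} (S1fam r a)"
  shows "lin_indep_family (S2idx r) (S2fam r a)"
  unfolding lin_indep_family_def
proof (intro allI impI ballI)
  fix c p
  assume rel: "(\<Sum>p\<in>S2idx r. pconst (c p) * S2fam r a p) = 0" and p: "p \<in> S2idx r"
  interpret S2_relation_values r "a 0" "a 1" "\<lambda>j. c (j, r)" "\<lambda>j. c (j, r + 1)" "c (r, r + 1)"
    "pair_square_sum r c"
    using rel by (rule S2_relation_values_of_S2_relation)
  note indep = S1_indep_imp_offdiag_indep[OF assms]
  obtain i k where ik: "p = (i, k)" "i < k" "k < r + 2"
    using p unfolding S2idx_def by auto
  consider "k < r" | "k = r" | "k = r + 1" "i < r" | "k = r + 1" "i = r"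
    using ik by linarith
  then show "c p = 0"
  proof cases
    case 1
    then show ?thesis
      using Q_eq_0[OF indep] pair_square_sum_at_pair[of i k r c] ik by simp
  next
    case 2
    then show ?thesis
      using alpha_beta_eq_0[OF indep] ik by simp
  next
    case 3
    then show ?thesis
      using alpha_beta_eq_0[OF indep] ik by simp
  next
    case 4
    then have "p = (r, r + 1)"
      using ik by simp
    then show ?thesis
      using gamma_eq_0[OF indep] by simp
  qed
qed

section \<open>Independence of S2 implies independence of S1\<close>

lemma S2_dependent_if_S1_relation_with_zero_coeff:
  assumes R: "(\<Sum>i\<in>{0..<r+2}. pconst (c i) * S1fam r a i) = 0"
    and k: "k < r + 2" "c k = 0" and k0: "k0 < r + 2" "c k0 \<noteq> 0"
  shows "\<not> lin_indep_family (S2idx r) (S2fam r a)"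
proof
  assume indep: "lin_indep_family (S2idx r) (S2fam r a)"
  define pair where "pair i = (min i k, max i k)" for i
  define d where "d p = (if fst p = k then c (snd p) else if snd p = k then c (fst p) else 0)" for p
  let ?I = "{0..<r+2} - {k}"
  have inj: "inj_on pair ?I"
    by (auto simp: inj_on_def pair_def min_def max_def split: if_splits)
  have pair_in: "pair ` ?I \<subseteq> S2idx r"
    using k by (auto simp: pair_def S2idx_def min_def max_def)
  have "finite (S2idx r)"
    by (rule finite_subset[of _ "{..<r+2} \<times> {..<r+2}"]) (auto simp: S2idx_def)
  moreover have "d p = 0" if p: "p \<in> S2idx r - pair ` ?I" for p
  proof -
    obtain i j where ij: "p = (i, j)" "i < j" "j < r + 2"
      using p unfolding S2idx_def by auto
    have "p \<noteq> pair n" if "n < r + 2" "n \<noteq> k" for n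
      using that p by auto
    from this[of i] this[of j] show ?thesis
      using ij by (auto simp: d_def pair_def)
  qed
  ultimately have "(\<Sum>p\<in>S2idx r. pconst (d p) * S2fam r a p)
      = (\<Sum>p\<in>pair ` ?I. pconst (d p) * S2fam r a p)"
    using pair_in by (intro sum.mono_neutral_right) auto
  also have "\<dots> = (\<Sum>i\<in>?I. pconst (c i) * S1fam r a i * S1fam r a k)"
    unfolding sum.reindex[OF inj]
    by (intro sum.cong refl) (auto simp: d_def pair_def S2fam_def min_def max_def mult_ac)
  also have "\<dots> = (\<Sum>i\<in>?I. pconst (c i) * S1fam r a i) * S1fam r a k"
    by (simp add: sum_distrib_right)
  also have "(\<Sum>i\<in>?I. pconst (c i) * S1fam r a i) = 0"
    using sum.remove[of "{0..<r+2}" k "\<lambda>i. pconst (c i) * S1fam r a i"] R k by simp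
  finally have "\<forall>p\<in>S2idx r. d p = 0"
    using indep unfolding lin_indep_family_def by simp
  moreover have "k0 \<noteq> k"
    using k k0 by auto
  then have "pair k0 \<in> S2idx r"
    using pair_in k0 by auto
  moreover have "d (pair k0) = c k0"
    using k k0 by (auto simp: d_def pair_def min_def max_def)
  ultimately show False
    using k0 by auto
qed

lemma no_three_orthogonal_nonisotropic:
  fixes p q a0 a1 a2 b0 b1 b2 :: "'a::idom"
  assumes o01: "p * a0 * a1 + q * b0 * b1 = 0" and o02: "p * a0 * a2 + q * b0 * b2 = 0"
    and o12: "p * a1 * a2 + q * b1 * b2 = 0"
    and n0: "p * a0^2 + q * b0^2 \<noteq> 0" and n1: "p * a1^2 + q * b1^2 \<noteq> 0"
    and n2: "p * a2^2 + q * b2^2 \<noteq> 0"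
  shows False
proof -
  define d where "d = a1 * b2 - a2 * b1"
  have "p * a0 * d = b2 * (p * a0 * a1 + q * b0 * b1) - b1 * (p * a0 * a2 + q * b0 * b2)"
    by (simp add: d_def algebra_simps)
  then have e1: "p * a0 * d = 0"
    using o01 o02 by simp
  have "q * b0 * d = a1 * (p * a0 * a2 + q * b0 * b2) - a2 * (p * a0 * a1 + q * b0 * b1)"
    by (simp add: d_def algebra_simps)
  then have e2: "q * b0 * d = 0"
    using o01 o02 by simp
  have "(p * a0^2 + q * b0^2) * d = a0 * (p * a0 * d) + b0 * (q * b0 * d)"
    by (simp add: algebra_simps power2_eq_square)
  then have "d = 0"
    using e1 e2 n0 by simp
  have "(p * a1 * a2 + q * b1 * b2)^2 - (p * a1^2 + q * b1^2) * (p * a2^2 + q * b2^2) = - p * q * d^2"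
    by (simp add: d_def algebra_simps power2_eq_square)
  then have "(p * a1^2 + q * b1^2) * (p * a2^2 + q * b2^2) = 0"
    using o12 \<open>d = 0\<close> by simp
  then show False
    using n1 n2 by simp
qed

lemma S1_relation_values:
  assumes "(\<Sum>k\<in>{0..<r+2}. pconst (c k) * S1fam r a k) = 0"
  shows "square_sum r c x + c r * (linear_sum r (a 0) x)^2
    + c (r + 1) * (linear_sum r (a 1) x)^2 = 0"
proof -
  have "(\<Sum>k\<in>{0..<r+2}. c k * eval_poly x (S1fam r a k)) = 0"
    using arg_cong[OF assms, of "eval_poly x"]
    by (simp only: eval_poly_sum eval_poly_mult eval_poly_pconst eval_poly_0)
  then show ?thesis
    by (simp add: atLeast0LessThan eval_poly_S1fam square_sum_def)
qed

lemma S1_relation_coeff_eq_0: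
  assumes "3 \<le> r" and R: "(\<Sum>k\<in>{0..<r+2}. pconst (c k) * S1fam r a k) = 0"
  shows "\<exists>j<r. c j = 0"
proof (rule ccontr)
  assume "\<not> (\<exists>j<r. c j = 0)"
  then have nz: "c j \<noteq> 0" if "j < r" for j
    using that by blast
  note at_point = S1_relation_values[OF R]
  have nonisotropic: "c r * (a 0 j)^2 + c (r + 1) * (a 1 j)^2 \<noteq> 0" if "j < r" for j
    using at_point[of "(\<lambda>_. 0)(j := 1)"] nz[OF that] that by (auto simp: add.assoc)
  have orthogonal: "c r * a 0 j * a 0 k + c (r + 1) * a 1 j * a 1 k = 0"
    if "j < r" "k < r" "j \<noteq> k" for j k
  proof -
    define E where "E t = c j + c k + c r * (a 0 j + a 0 k * t)^2 + c (r + 1) * (a 1 j + a 1 k * t)^2"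
      for t
    have E: "E t = 0" if "t^2 = 1" for t
      using at_point[of "(\<lambda>_. 0)(j := 1, k := t)"] \<open>j < r\<close> \<open>k < r\<close> \<open>j \<noteq> k\<close> that
      by (simp add: E_def add.assoc)
    have "4 * (c r * a 0 j * a 0 k + c (r + 1) * a 1 j * a 1 k) = E 1 - E (- 1)"
      unfolding E_def by (simp add: algebra_simps power2_eq_square)
    also have "\<dots> = 0"
      by (simp add: E)
    finally show ?thesis
      by (simp only: mult_eq_0_iff) simp
  qed
  show False
    using no_three_orthogonal_nonisotropic[OF orthogonal[of 0 1] orthogonal[of 0 2] orthogonal[of 1 2]
        nonisotropic[of 0] nonisotropic[of 1] nonisotropic[of 2]] \<open>3 \<le> r\<close>
    by simp
qed

text \<open>
  The multiplier -(c1 u0^2 v0^2 X^2 + c0 u1^2 v1^2 Y^2) of the relation is chosen so that X^4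
  and Y^4 cancel, leaving a combination of products of distinct members in which
  (u0 X + u1 Y)^2 (v0 X + v1 Y)^2 has the coefficient c0 c1.
\<close>

lemma binary_S2_identity:
  fixes X Y u0 u1 v0 v1 c0 c1 c2 c3 :: "'a::comm_ring_1"
  assumes "c0 * X^2 + c1 * Y^2 + c2 * (u0 * X + u1 * Y)^2 + c3 * (v0 * X + v1 * Y)^2 = 0"
  shows "(c0 * c1 * (u0^2 * v1^2 + u1^2 * v0^2 - 4 * u0 * u1 * v0 * v1)
        - c1^2 * u0^2 * v0^2 - c0^2 * u1^2 * v1^2) * (X^2 * Y^2)
    + (- c0 * c1 * v0^2 - c1 * u0^2 * v0^2 * c2) * (X^2 * (u0 * X + u1 * Y)^2)
    + (- c0 * c1 * u0^2 - c1 * u0^2 * v0^2 * c3) * (X^2 * (v0 * X + v1 * Y)^2)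
    + (- c0 * c1 * v1^2 - c0 * u1^2 * v1^2 * c2) * (Y^2 * (u0 * X + u1 * Y)^2)
    + (- c0 * c1 * u1^2 - c0 * u1^2 * v1^2 * c3) * (Y^2 * (v0 * X + v1 * Y)^2)
    + c0 * c1 * ((u0 * X + u1 * Y)^2 * (v0 * X + v1 * Y)^2) = 0"
proof -
  have "(c0 * c1 * (u0^2 * v1^2 + u1^2 * v0^2 - 4 * u0 * u1 * v0 * v1)
        - c1^2 * u0^2 * v0^2 - c0^2 * u1^2 * v1^2) * (X^2 * Y^2)
    + (- c0 * c1 * v0^2 - c1 * u0^2 * v0^2 * c2) * (X^2 * (u0 * X + u1 * Y)^2)
    + (- c0 * c1 * u0^2 - c1 * u0^2 * v0^2 * c3) * (X^2 * (v0 * X + v1 * Y)^2)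
    + (- c0 * c1 * v1^2 - c0 * u1^2 * v1^2 * c2) * (Y^2 * (u0 * X + u1 * Y)^2)
    + (- c0 * c1 * u1^2 - c0 * u1^2 * v1^2 * c3) * (Y^2 * (v0 * X + v1 * Y)^2)
    + c0 * c1 * ((u0 * X + u1 * Y)^2 * (v0 * X + v1 * Y)^2)
    = - (c1 * u0^2 * v0^2 * X^2 + c0 * u1^2 * v1^2 * Y^2)
      * (c0 * X^2 + c1 * Y^2 + c2 * (u0 * X + u1 * Y)^2 + c3 * (v0 * X + v1 * Y)^2)"
    by (simp add: algebra_simps power2_eq_square)
  with assms show ?thesis
    by simp
qed

lemma S2_dependent_if_binary_S1_relation:
  assumes R: "(\<Sum>k\<in>{0..<2+2}. pconst (c k) * S1fam 2 a k) = 0"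
    and "c 0 \<noteq> 0" "c 1 \<noteq> 0"
  shows "\<not> lin_indep_family (S2idx 2) (S2fam 2 a)"
proof
  assume indep: "lin_indep_family (S2idx 2) (S2fam 2 a)"
  define X Y where "X = pvar 0" and "Y = pvar 1"
  define u0 u1 v0 v1 where "u0 = a 0 0" and "u1 = a 0 1" and "v0 = a 1 0" and "v1 = a 1 1"
  define F G where "F = pconst u0 * X + pconst u1 * Y" and "G = pconst v0 * X + pconst v1 * Y"
  have S1: "S1fam 2 a 0 = X^2" "S1fam 2 a 1 = Y^2" "S1fam 2 a 2 = F^2" "S1fam 2 a 3 = G^2"
    by (simp_all add: S1fam_def linform_def eval_nat_numeral X_def Y_def F_def G_def
        u0_def u1_def v0_def v1_def)
  have pairs: "{0..<4} = {0, 1, 2, 3 :: nat}" "{..<4} = {0, 1, 2, 3 :: nat}" "{..<3} = {0, 1, 2 :: nat}"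
    "{..<2} = {0, 1 :: nat}" "{..<1} = {0 :: nat}"
    by auto
  have "pconst (c 0) * X^2 + pconst (c 1) * Y^2 + pconst (c 2) * F^2 + pconst (c 3) * G^2 = 0"
    using R by (simp add: pairs S1 add.assoc flip: One_nat_def)
  note identity = binary_S2_identity[OF this[unfolded F_def G_def]]
  define d where "d p =
    (if p = (0, 1) then c 0 * c 1 * (u0^2 * v1^2 + u1^2 * v0^2 - 4 * u0 * u1 * v0 * v1)
        - c 1^2 * u0^2 * v0^2 - c 0^2 * u1^2 * v1^2
     else if p = (0, 2) then - c 0 * c 1 * v0^2 - c 1 * u0^2 * v0^2 * c 2
     else if p = (0, 3) then - c 0 * c 1 * u0^2 - c 1 * u0^2 * v0^2 * c 3
     else if p = (1, 2) then - c 0 * c 1 * v1^2 - c 0 * u1^2 * v1^2 * c 2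
     else if p = (1, 3) then - c 0 * c 1 * u1^2 - c 0 * u1^2 * v1^2 * c 3
     else c 0 * c 1)" for p :: "nat \<times> nat"
  have "(\<Sum>p\<in>S2idx 2. pconst (d p) * S2fam 2 a p) = 0"
    using identity
    by (simp add: sum_S2idx pairs d_def S2fam_def S1 F_def G_def pconst_mult pconst_add pconst_diff
        pconst_minus pconst_numeral pconst_power algebra_simps flip: One_nat_def)
  moreover have "(2, 3) \<in> S2idx 2"
    by (simp add: S2idx_def)
  ultimately have "d (2, 3) = 0"
    using indep unfolding lin_indep_family_def by blast
  with assms show False
    by (simp add: d_def)
qed

lemma S2_indep_imp_S1_indep:
  assumes "2 \<le> r" and indep: "lin_indep_family (S2idx r) (S2fam r a)"
  shows "lin_indep_family {0..<r+2} (S1fam r a)"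
proof (rule ccontr)
  assume "\<not> lin_indep_family {0..<r+2} (S1fam r a)"
  then obtain c k0 where R: "(\<Sum>k\<in>{0..<r+2}. pconst (c k) * S1fam r a k) = 0"
    and k0: "k0 < r + 2" "c k0 \<noteq> 0"
    unfolding lin_indep_family_def by auto
  show False
  proof (cases "\<exists>k<r+2. c k = 0")
    case True
    then show False
      using S2_dependent_if_S1_relation_with_zero_coeff[OF R _ _ k0] indep by blast
  next
    case False
    then have "r = 2"
      using S1_relation_coeff_eq_0[OF _ R] \<open>2 \<le> r\<close> by force
    then show False
      using S2_dependent_if_binary_S1_relation[of c a] R False indep by simp
  qed
qed

theorem theorem1p2:
  fixes r :: nat and a :: "nat \<Rightarrow> nat \<Rightarrow> complex"
  assumes "r \<ge> 2"
  shows "lin_indep_family (S2idx r) (S2fam r a) \<longleftrightarrow> lin_indep_family {0..<r+2} (S1fam r a)"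
  using S2_indep_imp_S1_indep[OF assms] S1_indep_imp_S2_indep by blast

end
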